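(* Let $m$ be a positive integer whose Collatz trajectory $\{T^k(m)\}_{k=1}^\infty$ is unbounded (diverging). Then the function \[ F(z)=\sum_{p=0}^\infty z^{m2^p}+\sum_{k=1}^\infty z^{T^k(m)} \] belongs to $A(D)$ and is a fixed point of $\mathcal{T}$: $\mathcal{T}F=F$.
   Context: $T:\mathbb{Z}\to\mathbb{Z}$ is the (reduced) Collatz map: $T(n)=\frac{3n+1}{2}$ for odd $n$, $T(n)=\frac n2$ for even $n$; $T^k$ is its $k$-th iterate. $D$ is the open unit disk and $A(D)$ the space of holomorphic functions on $D$. The operator $\mathcal{T}$ is defined on $A(D)$ by $\mathcal{T}\big(\sum_{n\ge0}a_nz^n\big)=\sum_{n\ge0}a_nz^{T(n)}$, i.e. $\mathcal{T}z^n=z^{T(n)}$ (equivalently $\mathcal{T}f(z)=(Sf)(\sqrt z)+\sqrt z\,(Af)(z^{3/2})$ with $S,A$ the even and odd parts of $f$). *)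

theory Defs
  imports "HOL-Analysis.Analysis"
begin

definition collatz :: "int \<Rightarrow> int" where
  "collatz n = (if odd n then (3 * n + 1) div 2 else n div 2)"

text \<open>The operator on A(D): sum a_n z^n is sent to sum a_n z^(T n), where a_n is the
  n-th Taylor coefficient of f at 0 (T maps nonnegative integers to nonnegative integers).\<close>
definition collatz_op :: "(complex \<Rightarrow> complex) \<Rightarrow> complex \<Rightarrow> complex" where
  "collatz_op f z = (\<Sum>n. (deriv ^^ n) f 0 / fact n * z ^ nat (collatz (int n)))"

definition collatz_F :: "int \<Rightarrow> complex \<Rightarrow> complex" where
  "collatz_F m z = (\<Sum>p. z ^ nat (m * 2 ^ p)) + (\<Sum>k. z ^ nat ((collatz ^^ Suc k) m))"

end

theory Submission
  imports Defs
begin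

text \<open>Continue the trajectory of m backwards by 2m, 4m, ... to a two-sided sequence
  x(j), j \<in> \<int>, with T(x(j)) = x(j+1); its range S is the exponent set of F. A repetition
  x(i) = x(j) with i < j makes the sequence periodic from i on, hence the trajectory bounded.
  So for a divergent trajectory j \<mapsto> x(j) is injective and T permutes S like the shift.
  Therefore F(z) = \<Sum>n\<in>S. z^n has coefficients in {0, 1} and is holomorphic in the unit disk,
  and reindexing along this permutation gives \<T>F(z) = \<Sum>n\<in>S. z^T(n) = \<Sum>n\<in>S. z^n = F(z).\<close>

lemma image_atLeast_eq_if_repeat:
  fixes e :: "int \<Rightarrow> 'a"
  assumes "\<And>j. f (e j) = e (j + 1)" and "e i = e j" "i < j"
  shows "e ` {i..} = e ` {i..<j}"
proof -
  define p where "p = j - i"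
  have "p > 0" using \<open>i < j\<close> by (simp add: p_def)
  have shift: "e (k + p) = e k" if "k \<ge> i" for k
    using that
  proof (induction k rule: int_ge_induct)
    case (step k)
    then show ?case
      using assms(1)[of k] assms(1)[of "k + p"] by (simp add: algebra_simps)
  qed (use assms(2) in \<open>simp add: p_def\<close>)
  have periodic: "e (k + int n * p) = e k" if "k \<ge> i" for k n
  proof (induction n)
    case (Suc n)
    have "k + int n * p \<ge> i" using that \<open>p > 0\<close> by (simp add: add_increasing2)
    then have "e (k + int n * p + p) = e (k + int n * p)" by (rule shift)
    then show ?case using Suc by (simp add: algebra_simps)
  qed simp
  have "e k \<in> e ` {i..<j}" if "k \<ge> i" for k
  proof -
    have "(k - i) div p \<ge> 0" using \<open>p > 0\<close> that by (simp add: div_int_pos_iff)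
    moreover have "(k - i) mod p + (k - i) div p * p = k - i" by (rule mod_div_mult_eq)
    ultimately have "e k = e (i + (k - i) mod p + int (nat ((k - i) div p)) * p)"
      by (simp add: algebra_simps)
    also have "\<dots> = e (i + (k - i) mod p)"
      using \<open>p > 0\<close> by (intro periodic) simp
    finally have "e k = e (i + (k - i) mod p)" .
    moreover have "i + (k - i) mod p \<in> {i..<j}"
      using pos_mod_bound[OF \<open>p > 0\<close>, of "k - i"] pos_mod_sign[OF \<open>p > 0\<close>, of "k - i"]
      unfolding p_def by simp
    ultimately show ?thesis by (simp add: image_eqI)
  qed
  then show ?thesis by auto
qed

lemma bij_betw_range_if_shift:
  fixes e :: "int \<Rightarrow> 'a"
  assumes "inj e" and step: "\<And>j. f (e j) = e (j + 1)"
  shows "bij_betw f (range e) (range e)"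
proof (rule bij_betw_imageI)
  show "inj_on f (range e)"
  proof (rule inj_onI, clarify)
    fix a b assume "f (e a) = f (e b)"
    then have "e (a + 1) = e (b + 1)" by (simp add: step)
    then show "e a = e b" using \<open>inj e\<close> by (simp add: inj_eq)
  qed
  have "e j \<in> f ` range e" for j
    using step[of "j - 1"] by (metis diff_add_cancel rangeI image_eqI)
  then show "f ` range e = range e" by (auto simp: step)
qed

lemma summable_on_power:
  fixes z :: "'a :: {banach, real_normed_div_algebra}"
  assumes "norm z < 1"
  shows "(\<lambda>n. z ^ n) summable_on S"
proof -
  have "(\<lambda>n. z ^ n) summable_on UNIV"
    using assms by (intro norm_summable_imp_summable_on) (simp add: norm_power summable_geometric)
  then show ?thesis by (rule summable_on_subset_banach) simp
qed

lemma has_sum_imp_sums_of_bool: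
  fixes g :: "nat \<Rightarrow> 'a :: {topological_space, semiring_1}"
  assumes "(g has_sum s) S"
  shows "(\<lambda>n. of_bool (n \<in> S) * g n) sums s"
proof (rule has_sum_imp_sums)
  show "((\<lambda>n. of_bool (n \<in> S) * g n) has_sum s) UNIV"
    using assms by (subst has_sum_cong_neutral[where T = S and g = g]) auto
qed

lemma sums_of_bool_power:
  fixes z :: "'a :: {banach, real_normed_div_algebra}"
  assumes "norm z < 1"
  shows "(\<lambda>n. of_bool (n \<in> S) * z ^ n) sums (\<Sum>\<^sub>\<infinity>n\<in>S. z ^ n)"
  using summable_on_power[OF assms] by (intro has_sum_imp_sums_of_bool has_sum_infsum)

lemma suminf_power_eq_infsum_range:
  fixes z :: "'a :: {banach, real_normed_div_algebra}"
  assumes "inj g" "norm z < 1"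
  shows "(\<Sum>p. z ^ g p) = (\<Sum>\<^sub>\<infinity>n\<in>range g. z ^ n)"
proof -
  have "((\<lambda>n. z ^ n) has_sum (\<Sum>\<^sub>\<infinity>n\<in>range g. z ^ n)) (range g)"
    using summable_on_power[OF assms(2)] by (rule has_sum_infsum)
  then have "((\<lambda>p. z ^ g p) has_sum (\<Sum>\<^sub>\<infinity>n\<in>range g. z ^ n)) UNIV"
    using has_sum_reindex[OF assms(1), of "\<lambda>n. z ^ n"] by (simp add: comp_def)
  then show ?thesis by (metis has_sum_imp_sums sums_unique)
qed

lemma fps_conv_radius_of_bool:
  "fps_conv_radius (Abs_fps (\<lambda>n. of_bool (n \<in> S)) :: 'a :: {banach, real_normed_field} fps) \<ge> 1"
  unfolding fps_conv_radius_def fps_nth_Abs_fps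
proof (rule conv_radius_geI_ex')
  fix r :: real assume "0 < r" "ereal r < 1"
  then show "summable (\<lambda>n. of_bool (n \<in> S) * (of_real r :: 'a) ^ n)"
    by (intro sums_summable[OF sums_of_bool_power]) simp
qed

lemma eval_fps_of_bool:
  fixes z :: "'a :: {banach, real_normed_field}"
  assumes "norm z < 1"
  shows "eval_fps (Abs_fps (\<lambda>n. of_bool (n \<in> S))) z = (\<Sum>\<^sub>\<infinity>n\<in>S. z ^ n)"
  unfolding eval_fps_def fps_nth_Abs_fps
  using sums_of_bool_power[OF assms] by (rule sums_unique[symmetric])

lemma has_fps_expansion_infsum_power:
  "(\<lambda>z::'a :: {banach, real_normed_field}. \<Sum>\<^sub>\<infinity>n\<in>S. z ^ n)
     has_fps_expansion Abs_fps (\<lambda>n. of_bool (n \<in> S))"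
  unfolding has_fps_expansion_def
proof
  show "fps_conv_radius (Abs_fps (\<lambda>n. of_bool (n \<in> S)) :: 'a fps) > 0"
    using fps_conv_radius_of_bool by (rule less_le_trans[rotated]) simp
  show "eventually (\<lambda>z. eval_fps (Abs_fps (\<lambda>n. of_bool (n \<in> S))) z = (\<Sum>\<^sub>\<infinity>n\<in>S. z ^ n))
          (nhds (0 :: 'a))"
    using eventually_nhds_in_open[of "ball 0 1" 0]
    by (rule eventually_mono) (simp_all add: eval_fps_of_bool)
qed

lemma holomorphic_on_infsum_power:
  "(\<lambda>z::complex. \<Sum>\<^sub>\<infinity>n\<in>S. z ^ n) holomorphic_on ball 0 1"
proof (rule holomorphic_transform)
  show "eval_fps (Abs_fps (\<lambda>n. of_bool (n \<in> S))) holomorphic_on ball 0 1"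
  proof (intro holomorphic_on_eval_fps subsetI)
    fix z :: complex assume "z \<in> ball 0 1"
    then have "ereal (norm z) < 1" by simp
    then have "ereal (norm z) < fps_conv_radius (Abs_fps (\<lambda>n. of_bool (n \<in> S)) :: complex fps)"
      using fps_conv_radius_of_bool by (rule less_le_trans)
    then show "z \<in> eball 0 (fps_conv_radius (Abs_fps (\<lambda>n. of_bool (n \<in> S)) :: complex fps))"
      by simp
  qed
qed (simp add: eval_fps_of_bool)

lemma collatz_pos: "n > 0 \<Longrightarrow> collatz n > 0"
  unfolding collatz_def by (auto elim!: oddE)

lemma funpow_collatz_pos: "m > 0 \<Longrightarrow> (collatz ^^ k) m > 0"
  by (induction k) (auto intro: collatz_pos)

lemma collatz_double: "collatz (2 * x) = x"
  unfolding collatz_def by simp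

definition collatz_orbit :: "int \<Rightarrow> int \<Rightarrow> nat" where
  "collatz_orbit m j = nat (if j \<le> 0 then m * 2 ^ nat (- j) else (collatz ^^ nat j) m)"

lemma int_collatz_orbit:
  "m > 0 \<Longrightarrow>
    int (collatz_orbit m j) = (if j \<le> 0 then m * 2 ^ nat (- j) else (collatz ^^ nat j) m)"
  unfolding collatz_orbit_def by (simp add: funpow_collatz_pos less_imp_le)

lemma collatz_collatz_orbit:
  assumes "m > 0"
  shows "nat (collatz (int (collatz_orbit m j))) = collatz_orbit m (j + 1)"
proof (cases "j < 0")
  case True
  then have "nat (- j) = Suc (nat (- (j + 1)))" by simp
  then have "collatz (m * 2 ^ nat (- j)) = m * 2 ^ nat (- (j + 1))"
    using collatz_double[of "m * 2 ^ nat (- (j + 1))"] by (simp add: mult_ac)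
  with True show ?thesis
    using assms by (simp add: int_collatz_orbit collatz_orbit_def)
next
  case False
  then have "nat (j + 1) = Suc (nat j)" by simp
  with False show ?thesis
    using assms by (auto simp: int_collatz_orbit collatz_orbit_def funpow_collatz_pos less_imp_le)
qed

lemma inj_collatz_orbit:
  assumes "m > 0" and diverges: "\<not> bdd_above (range (\<lambda>k. (collatz ^^ Suc k) m))"
  shows "inj (collatz_orbit m)"
proof (rule ccontr)
  assume "\<not> inj (collatz_orbit m)"
  then obtain i j where repeat: "collatz_orbit m i = collatz_orbit m j" "i < j"
    unfolding inj_def by (metis linorder_neqE)
  have "collatz_orbit m ` {i..} = collatz_orbit m ` {i..<j}"
    using collatz_collatz_orbit[OF \<open>m > 0\<close>] repeat by (rule image_atLeast_eq_if_repeat)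
  then have "finite (collatz_orbit m ` ({1..<i} \<union> {i..}))"
    by (simp add: image_Un)
  moreover have "(collatz ^^ Suc k) m = int (collatz_orbit m (int k + 1))" for k
    using \<open>m > 0\<close> by (simp add: int_collatz_orbit nat_add_distrib)
  then have "range (\<lambda>k. (collatz ^^ Suc k) m) \<subseteq> int ` collatz_orbit m ` ({1..<i} \<union> {i..})"
    by force
  ultimately show False
    using diverges by (meson bdd_above_finite bdd_above_mono finite_imageI)
qed

lemma collatz_F_eq_infsum_power:
  assumes "m > 0" "inj (collatz_orbit m)" "norm z < 1"
  shows "collatz_F m z = (\<Sum>\<^sub>\<infinity>n\<in>range (collatz_orbit m). z ^ n)"
proof -
  define below where "below p = collatz_orbit m (- int p)" for p
  define above where "above k = collatz_orbit m (int k + 1)" for k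
  have "inj below" "inj above"
    using \<open>inj (collatz_orbit m)\<close> by (auto intro!: injI simp: below_def above_def inj_eq)
  have disjoint: "range below \<inter> range above = {}"
    using \<open>inj (collatz_orbit m)\<close> by (auto simp: below_def above_def inj_eq)
  have "collatz_orbit m j \<in> range below \<union> range above" for j
  proof (cases "j \<le> 0")
    case True
    then have "collatz_orbit m j = below (nat (- j))" by (simp add: below_def)
    then show ?thesis by simp
  next
    case False
    then have "collatz_orbit m j = above (nat (j - 1))" by (simp add: above_def)
    then show ?thesis by simp
  qed
  then have union: "range below \<union> range above = range (collatz_orbit m)"
    by (auto simp: below_def above_def)
  have "collatz_F m z = (\<Sum>p. z ^ below p) + (\<Sum>k. z ^ above k)"
    using \<open>m > 0\<close> by (simp add: collatz_F_def below_def above_def collatz_orbit_def nat_add_distrib)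
  also have "\<dots> = (\<Sum>\<^sub>\<infinity>n\<in>range below. z ^ n) + (\<Sum>\<^sub>\<infinity>n\<in>range above. z ^ n)"
    using \<open>inj below\<close> \<open>inj above\<close> \<open>norm z < 1\<close> by (simp add: suminf_power_eq_infsum_range)
  also have "\<dots> = (\<Sum>\<^sub>\<infinity>n\<in>range (collatz_orbit m). z ^ n)"
    using summable_on_power[OF \<open>norm z < 1\<close>] disjoint
    by (simp add: infsum_Un_disjoint[symmetric] union)
  finally show ?thesis .
qed

lemma collatz_op_cong:
  assumes "eventually (\<lambda>z. f z = g z) (nhds 0)"
  shows "collatz_op f = collatz_op g"
  unfolding collatz_op_def using higher_deriv_cong_ev[OF assms refl] by simp

lemma collatz_op_infsum_power:
  assumes "bij_betw (\<lambda>n. nat (collatz (int n))) S S" "norm z < 1"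
  shows "collatz_op (\<lambda>z. \<Sum>\<^sub>\<infinity>n\<in>S. z ^ n) z = (\<Sum>\<^sub>\<infinity>n\<in>S. z ^ n)"
proof -
  have coeff: "(deriv ^^ k) (\<lambda>z::complex. \<Sum>\<^sub>\<infinity>n\<in>S. z ^ n) 0 / fact k = of_bool (k \<in> S)" for k
    using fps_nth_fps_expansion[OF has_fps_expansion_infsum_power, of S k, symmetric]
    by (simp only: fps_nth_Abs_fps)
  have "((\<lambda>n. z ^ n) has_sum (\<Sum>\<^sub>\<infinity>n\<in>S. z ^ n)) S"
    using summable_on_power[OF assms(2)] by (rule has_sum_infsum)
  then have "((\<lambda>n. z ^ nat (collatz (int n))) has_sum (\<Sum>\<^sub>\<infinity>n\<in>S. z ^ n)) S"
    using has_sum_reindex_bij_betw[OF assms(1), of "\<lambda>n. z ^ n"] by simp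
  then have "(\<lambda>n. of_bool (n \<in> S) * z ^ nat (collatz (int n))) sums (\<Sum>\<^sub>\<infinity>n\<in>S. z ^ n)"
    by (rule has_sum_imp_sums_of_bool)
  then show ?thesis
    unfolding collatz_op_def coeff by (rule sums_unique[symmetric])
qed

theorem mainTheorem4:
  fixes m :: int
  assumes "m > 0"
    and "\<not> bdd_above (range (\<lambda>k. (collatz ^^ Suc k) m))"
  shows "collatz_F m holomorphic_on ball 0 1
         \<and> (\<forall>z \<in> ball 0 1. collatz_op (collatz_F m) z = collatz_F m z)"
proof -
  let ?S = "range (collatz_orbit m)"
  have inj: "inj (collatz_orbit m)"
    using assms by (rule inj_collatz_orbit)
  have F: "(\<Sum>\<^sub>\<infinity>n\<in>?S. z ^ n) = collatz_F m z" if "z \<in> ball 0 1" for z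
    using collatz_F_eq_infsum_power[OF \<open>m > 0\<close> inj] that by simp
  have "bij_betw (\<lambda>n. nat (collatz (int n))) ?S ?S"
    using inj collatz_collatz_orbit[OF \<open>m > 0\<close>] by (rule bij_betw_range_if_shift)
  moreover have "eventually (\<lambda>z. z \<in> ball 0 1) (nhds (0 :: complex))"
    by (intro eventually_nhds_in_open) simp_all
  then have "collatz_op (collatz_F m) = collatz_op (\<lambda>z. \<Sum>\<^sub>\<infinity>n\<in>?S. z ^ n)"
    by (intro collatz_op_cong) (auto elim!: eventually_mono simp: F)
  ultimately have "collatz_op (collatz_F m) z = collatz_F m z" if "z \<in> ball 0 1" for z
    using that collatz_op_infsum_power F by simp
  moreover have "collatz_F m holomorphic_on ball 0 1"
    using holomorphic_on_infsum_power F by (rule holomorphic_transform)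
  ultimately show ?thesis by blast
qed

end
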